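(* Let $n$ be even and fix $\ell,D>0$. Let $\mathcal A$ be a first-order $p$-SCLI and let $z^{(t)}$ denote its iterates. Then there are constants $c_{\mathcal A},T_{\mathcal A}>0$ such that for every $T\ge T_{\mathcal A}$ there exist $F\in\mathcal F^{\mathrm{bil}}_{n,\ell,D}$, initial points $z^{(0)},z^{(-1)},\dots,z^{(-p+1)}\in\mathcal D_D$ and $T'\in\{T,T+1,\dots,T+p-1\}$ such that the iterates of $\mathcal A$ run on $F$ from this initialization satisfy $$\mathrm{Gap}_F^{\mathcal D_{2D}}(z^{(T')})\ge\frac{c_{\mathcal A}\,\ell D^2}{\sqrt T}.$$
   Context: A first-order $p$-SCLI is specified by fixed real scalars $\alpha_0,\dots,\alpha_{p-1},\beta_0,\dots,\beta_{p-1}$: given an operator $F:\mathbb R^n\to\mathbb R^n$ and initial points $z^{(0)},z^{(-1)},\dots,z^{(-p+1)}\in\mathbb R^n$, it generates $z^{(t)}=\sum_{j=0}^{p-1}\big(\alpha_jF(z^{(t-p+j)})+\beta_jz^{(t-p+j)}\big)$ for $t=1,2,\dots$. Write $z=(x,y)$ with $x,y\in\mathbb R^{n/2}$. For $R>0$, $\mathcal D_R:=\{x:\|x\|\le R\}\times\{y:\|y\|\le R\}\subset\mathbb R^{n/2}\times\mathbb R^{n/2}$. $\mathcal F^{\mathrm{bil}}_{n,\ell,D}$ is the set of $\ell$-Lipschitz operators $F:\mathbb R^n\to\mathbb R^n$ of the form $F(x,y)=(\nabla_xf(x,y),-\nabla_yf(x,y))$ where $f(x,y)=x^\top My+b_1^\top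 x+b_2^\top y$ for some $M\in\mathbb R^{(n/2)\times(n/2)}$, $b_1,b_2\in\mathbb R^{n/2}$, such that $F$ has a unique zero $z^*$ and $z^*\in\mathcal D_D$. For such $F$ (coming from $f$), $\mathrm{Gap}_F^{\mathcal D_{2D}}(x,y):=\max_{\|y'\|\le 2D}f(x,y')-\min_{\|x'\|\le 2D}f(x',y)$ (the total gap of the two-player zero-sum game with costs $f$ and $-f$). *)

theory Defs
  imports "HOL-Analysis.Analysis"
begin

text \<open>Points of R^n with n = 2 * CARD('m) are pairs (x,y) of vectors in R^(n/2) = real^'m;
  the product norm is the Euclidean norm of R^n.\<close>

type_synonym 'm pt = "(real^'m) \<times> (real^'m)"

definition domD :: "real \<Rightarrow> 'm::finite pt set" where
  "domD R = {(x, y). norm x \<le> R \<and> norm y \<le> R}"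

definition bil_f :: "real^'m^'m \<Rightarrow> real^'m \<Rightarrow> real^'m \<Rightarrow> real^'m \<Rightarrow> real^'m \<Rightarrow> real" where
  "bil_f M b1 b2 x y = x \<bullet> (M *v y) + b1 \<bullet> x + b2 \<bullet> y"

text \<open>F(x,y) = (grad_x f, - grad_y f) = (M y + b1, -(M^T x + b2)).\<close>
definition bil_F :: "real^'m^'m \<Rightarrow> real^'m \<Rightarrow> real^'m \<Rightarrow> 'm::finite pt \<Rightarrow> 'm pt" where
  "bil_F M b1 b2 z = (M *v snd z + b1, - (transpose M *v fst z + b2))"

definition bil_gap :: "real^'m^'m \<Rightarrow> real^'m \<Rightarrow> real^'m \<Rightarrow> real \<Rightarrow> 'm::finite pt \<Rightarrow> real" where
  "bil_gap M b1 b2 R z =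
     (SUP y'\<in>cball 0 R. bil_f M b1 b2 (fst z) y') - (INF x'\<in>cball 0 R. bil_f M b1 b2 x' (snd z))"

definition in_Fbil :: "real \<Rightarrow> real \<Rightarrow> real^'m^'m \<Rightarrow> real^'m \<Rightarrow> real^'m \<Rightarrow> ('m::finite pt \<Rightarrow> 'm pt) \<Rightarrow> bool" where
  "in_Fbil l D M b1 b2 F \<longleftrightarrow>
     F = bil_F M b1 b2 \<and> l-lipschitz_on UNIV F \<and>
     (\<exists>!z. F z = 0) \<and> (\<forall>z. F z = 0 \<longrightarrow> z \<in> domD D)"

text \<open>p-SCLI iterates. scli_win al be p F z0 t i = z^(t + i - p + 1) for i < p,
  where the initial points are z^(-k) = z0 k for k < p. Recurrence:
  z^(t) = sum_{j<p} (al j F(z^(t-p+j)) + be j z^(t-p+j)).\<close>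
primrec scli_win :: "(nat \<Rightarrow> real) \<Rightarrow> (nat \<Rightarrow> real) \<Rightarrow> nat \<Rightarrow> ('v::real_vector \<Rightarrow> 'v)
    \<Rightarrow> (nat \<Rightarrow> 'v) \<Rightarrow> nat \<Rightarrow> nat \<Rightarrow> 'v" where
  "scli_win al be p F z0 0 = (\<lambda>i. z0 (p - 1 - i))"
| "scli_win al be p F z0 (Suc t) = (\<lambda>i. if i < p - 1 then scli_win al be p F z0 t (Suc i)
      else (\<Sum>j<p. al j *\<^sub>R F (scli_win al be p F z0 t j) + be j *\<^sub>R scli_win al be p F z0 t j))"

definition scli_iter :: "(nat \<Rightarrow> real) \<Rightarrow> (nat \<Rightarrow> real) \<Rightarrow> nat \<Rightarrow> ('v::real_vector \<Rightarrow> 'v)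
    \<Rightarrow> (nat \<Rightarrow> 'v) \<Rightarrow> nat \<Rightarrow> 'v" where
  "scli_iter al be p F z0 t = scli_win al be p F z0 t (p - 1)"

end

(* On a line spanned by a unit vector, the bilinear game f(x, y) = mu (x - x0) (y - y0) becomes
   the complex operator w |-> -i mu (w - w0), and its total gap at w is at least D mu |w - w0|.
   If sum_j beta_j <> 1, the method has a fixed point other than w0, so the gap never decays.
   Otherwise the characteristic polynomial chi(z) = z^p - sum_j (alpha_j eta + beta_j) z^j at
   eta = -i mu has chi(1) = i mu sum_j alpha_j.  Comparing chi'(1)/chi(1) and chi''(1)/chi(1) with
   the sums of 1/(1 - r) over the roots r, and using
   Re (1/(1 - r)) = 1/2 + (1 - |r|^2) |1/(1 - r)|^2 / 2, one finds a root z with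
   |z|^2 >= 1 - C mu^2.  For mu ~ 1/sqrt T the geometric trajectory w_n ~ z^n still has modulus
   of order D at time T, so the gap is of order mu D^2 ~ l D^2 / sqrt T. *)

theory Submission
  imports Defs "HOL-Computational_Algebra.Fundamental_Theorem_Algebra"
begin

section \<open>Roots of the characteristic polynomial\<close>

lemma pderiv_sum: "pderiv (sum f A) = (\<Sum>a\<in>A. pderiv (f a))"
  by (induction A rule: infinite_finite_induct) (simp_all add: pderiv_add)

lemma poly_pderiv_prod_linear:
  fixes r :: "nat \<Rightarrow> 'a::field" and x :: 'a and p :: nat
  defines "P \<equiv> \<Prod>i<p. [:-r i, 1:]"
  assumes r: "\<And>i. i < p \<Longrightarrow> r i \<noteq> x"
  shows "poly P x = (\<Prod>i<p. x - r i)"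
    and "poly (pderiv P) x = poly P x * (\<Sum>i<p. 1 / (x - r i))"
    and "poly (pderiv (pderiv P)) x =
           poly P x * (\<Sum>i<p. \<Sum>j\<in>{..<p}-{i}. 1 / (x - r i) * (1 / (x - r j)))"
proof -
  define g where "g i = x - r i" for i
  have g: "i < p \<Longrightarrow> g i \<noteq> 0" for i
    using r[of i] by (auto simp: g_def)
  have poly_P: "poly (\<Prod>i\<in>B. [:-r i, 1:]) x = prod g B" for B
    by (simp add: poly_prod g_def)
  have pderiv_P: "pderiv (\<Prod>i\<in>B. [:-r i, 1:]) = (\<Sum>i\<in>B. \<Prod>j\<in>B-{i}. [:-r j, 1:])" for B
    by (simp add: pderiv_prod pderiv_pCons)
  have prod_remove: "prod g (B - {i}) = prod g B / g i" if "finite B" "i \<in> B" "g i \<noteq> 0" for B i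
    using prod_diff1[of B g i] that by simp
  show "poly P x = (\<Prod>i<p. x - r i)"
    by (simp add: P_def poly_P g_def)
  have "poly (pderiv P) x = (\<Sum>i<p. prod g ({..<p} - {i}))"
    by (simp add: P_def pderiv_P poly_sum poly_P)
  also have "\<dots> = (\<Sum>i<p. prod g {..<p} / g i)"
    by (rule sum.cong) (auto intro!: prod_remove g)
  also have "\<dots> = poly P x * (\<Sum>i<p. 1 / (x - r i))"
    by (simp add: P_def poly_P sum_distrib_left g_def divide_inverse)
  finally show "poly (pderiv P) x = poly P x * (\<Sum>i<p. 1 / (x - r i))" .
  have "poly (pderiv (pderiv P)) x = (\<Sum>i<p. \<Sum>j\<in>{..<p}-{i}. prod g ({..<p} - {i} - {j}))"
    by (simp add: P_def pderiv_P pderiv_sum poly_sum poly_P)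
  also have "\<dots> = (\<Sum>i<p. \<Sum>j\<in>{..<p}-{i}. prod g {..<p} / g i / g j)"
    by (intro sum.cong refl) (auto simp: prod_remove g)
  also have "\<dots> = poly P x * (\<Sum>i<p. \<Sum>j\<in>{..<p}-{i}. 1 / (x - r i) * (1 / (x - r j)))"
    by (simp add: P_def poly_P sum_distrib_left g_def divide_inverse mult_ac)
  finally show "poly (pderiv (pderiv P)) x =
      poly P x * (\<Sum>i<p. \<Sum>j\<in>{..<p}-{i}. 1 / (x - r i) * (1 / (x - r j)))" .
qed

lemma Re_inverse_one_minus_eq:
  fixes r :: complex
  assumes "r \<noteq> 1"
  shows "(1 - cmod r ^ 2) * cmod (1 / (1 - r)) ^ 2 = 2 * Re (1 / (1 - r)) - 1"
proof -
  define u where "u = 1 / (1 - r)"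
  have "r * u = u - 1"
    using assms by (simp add: u_def field_simps)
  then have "cmod r ^ 2 * cmod u ^ 2 = cmod (u - 1) ^ 2"
    by (metis norm_mult power_mult_distrib)
  moreover have "cmod (u - 1) ^ 2 = cmod u ^ 2 - 2 * Re u + 1"
    unfolding cmod_power2 by (simp add: power2_eq_square algebra_simps)
  ultimately show ?thesis
    by (simp add: u_def algebra_simps)
qed

lemma Re_inverse_one_minus_gt_half:
  fixes r :: complex
  assumes "cmod r < 1"
  shows "1 / 2 < Re (1 / (1 - r))"
proof -
  have "r \<noteq> 1"
    using assms by auto
  moreover have "0 < (1 - cmod r ^ 2) * cmod (1 / (1 - r)) ^ 2"
    using assms \<open>r \<noteq> 1\<close> by (simp add: power_less_one_iff abs_less_iff)
  ultimately show ?thesis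
    using Re_inverse_one_minus_eq by fastforce
qed

lemma exists_norm_ge_average:
  fixes f :: "nat \<Rightarrow> 'a::real_normed_vector"
  assumes "p \<noteq> 0"
  shows "\<exists>k<p. norm (\<Sum>i<p. f i) / p \<le> norm (f k)"
proof (rule ccontr)
  assume small: "\<not> ?thesis"
  have "norm (\<Sum>i<p. f i) \<le> (\<Sum>i<p. norm (f i))"
    by (rule norm_sum)
  also have "\<dots> < (\<Sum>i<p. norm (\<Sum>i<p. f i) / p)"
    using small assms by (intro sum_strict_mono) (auto simp: not_le)
  also have "\<dots> = norm (\<Sum>i<p. f i)"
    using assms by simp
  finally show False
    by simp
qed

lemma unit_disc_near_circle_of_large_Im_sum:
  fixes r :: "nat \<Rightarrow> complex" and m :: real and p :: nat
  defines "S \<equiv> \<Sum>i<p. 1 / (1 - r i)"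
  assumes disc: "\<forall>i<p. cmod (r i) < 1" and "0 < m" and m: "m \<le> \<bar>Im S\<bar>"
  shows "\<exists>i<p. 1 - cmod (r i) ^ 2 \<le> 2 * real p ^ 2 * Re S / m ^ 2"
proof -
  define u where "u i = 1 / (1 - r i)" for i
  have Re_nonneg: "0 \<le> Re (u i)" if "i < p" for i
    using Re_inverse_one_minus_gt_half[of "r i"] disc that by (simp add: u_def)
  have "p \<noteq> 0"
    using m \<open>0 < m\<close> by (cases p) (auto simp: S_def)
  have "\<exists>k<p. cmod S / p \<le> cmod (u k)"
    using exists_norm_ge_average[OF \<open>p \<noteq> 0\<close>] by (simp add: S_def u_def)
  then obtain k where "k < p" and k: "cmod S / p \<le> cmod (u k)"
    by blast
  have "m / p \<le> cmod (u k)"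
    using m abs_Im_le_cmod[of S] k by (smt (verit) divide_right_mono of_nat_0_le_iff)
  then have u_large: "(m / p) ^ 2 \<le> cmod (u k) ^ 2"
    using \<open>0 < m\<close> by (intro power_mono) auto
  have "Re (u k) \<le> (\<Sum>i<p. Re (u i))"
    using \<open>k < p\<close> Re_nonneg by (intro member_le_sum) auto
  then have "Re (u k) \<le> Re S"
    by (simp add: S_def u_def Re_sum)
  moreover have "(1 - cmod (r k) ^ 2) * cmod (u k) ^ 2 = 2 * Re (u k) - 1"
    unfolding u_def using disc \<open>k < p\<close> by (intro Re_inverse_one_minus_eq) auto
  ultimately have bound: "(1 - cmod (r k) ^ 2) * cmod (u k) ^ 2 \<le> 2 * Re S"
    by linarith
  have "1 - cmod (r k) ^ 2 \<le> 2 * real p ^ 2 * Re S / m ^ 2"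
  proof (cases "1 - cmod (r k) ^ 2 \<le> 0")
    case True
    have "0 \<le> 2 * real p ^ 2 * Re S / m ^ 2"
      using Re_nonneg[OF \<open>k < p\<close>] \<open>Re (u k) \<le> Re S\<close> by simp
    with True show ?thesis
      by linarith
  next
    case False
    then have "(1 - cmod (r k) ^ 2) * (m / p) ^ 2 \<le> 2 * Re S"
      using u_large bound by (smt (verit) mult_left_mono)
    then show ?thesis
      using \<open>0 < m\<close> \<open>p \<noteq> 0\<close> by (simp add: field_simps power_divide)
  qed
  then show ?thesis
    using \<open>k < p\<close> by blast
qed

lemma inverse_one_minus_norm_bound:
  fixes r :: "nat \<Rightarrow> complex" and s :: real
  defines "u \<equiv> \<lambda>i. 1 / (1 - r i)"
  assumes disc: "\<forall>i<p. cmod (r i) < 1" and sum_u: "(\<Sum>i<p. u i) = of_real s" and "i < p"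
  shows "cmod (u i) ^ 2 \<le> (real p + 1) * s ^ 2 + \<bar>Re (\<Sum>i<p. \<Sum>j\<in>{..<p}-{i}. u i * u j)\<bar>"
proof -
  define A where "A = Re (\<Sum>i<p. \<Sum>j\<in>{..<p}-{i}. u i * u j)"
  have Re_pos: "0 < Re (u i)" if "i < p" for i
    using Re_inverse_one_minus_gt_half[of "r i"] disc that by (simp add: u_def)
  have Re_sum: "(\<Sum>i<p. Re (u i)) = s"
    using arg_cong[OF sum_u, of Re] by simp
  have Re_sq: "Re (u i) ^ 2 \<le> s ^ 2" if "i < p" for i
  proof -
    have "Re (u i) \<le> s"
      unfolding Re_sum[symmetric] using that Re_pos by (intro member_le_sum) (auto intro: less_imp_le)
    then show ?thesis
      using Re_pos[OF that] by (intro power_mono) auto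
  qed
  have "(\<Sum>i<p. \<Sum>j\<in>{..<p}-{i}. u i * u j) = (\<Sum>i<p. u i * ((\<Sum>j<p. u j) - u i))"
    by (intro sum.cong refl) (simp add: sum_distrib_left[symmetric] sum_diff1)
  also have "\<dots> = (\<Sum>i<p. u i) ^ 2 - (\<Sum>i<p. u i ^ 2)"
    by (simp add: algebra_simps sum_subtractf power2_eq_square sum_distrib_left sum_distrib_right)
  finally have "(\<Sum>i<p. Re (u i) ^ 2 - Im (u i) ^ 2) = s ^ 2 - A"
    using sum_u by (simp add: A_def Re_sum power2_eq_square)
  then have "(\<Sum>i<p. Im (u i) ^ 2) = (\<Sum>i<p. Re (u i) ^ 2) - s ^ 2 + A"
    by (simp add: sum_subtractf)
  also have "\<dots> \<le> real p * s ^ 2 + \<bar>A\<bar>"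
  proof -
    have "(\<Sum>i<p. Re (u i) ^ 2) \<le> real p * s ^ 2"
      using sum_mono[of "{..<p}" "\<lambda>i. Re (u i) ^ 2" "\<lambda>_. s ^ 2"] Re_sq by simp
    then show ?thesis
      by (smt (verit) zero_le_power2)
  qed
  finally have "Im (u i) ^ 2 \<le> real p * s ^ 2 + \<bar>A\<bar>"
    using member_le_sum[of i "{..<p}" "\<lambda>i. Im (u i) ^ 2"] \<open>i < p\<close> by simp
  then show ?thesis
    using Re_sq[OF \<open>i < p\<close>] by (simp add: A_def cmod_power2 algebra_simps)
qed

(* The characteristic polynomial chi(z, eta) of the method, for the linear operator w |-> eta * w. *)
definition scli_charpoly :: "(nat \<Rightarrow> real) \<Rightarrow> (nat \<Rightarrow> real) \<Rightarrow> nat \<Rightarrow> complex \<Rightarrow> complex poly" where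
  "scli_charpoly al be p \<eta> = monom 1 p - (\<Sum>j<p. monom (of_real (al j) * \<eta> + of_real (be j)) j)"

lemma poly_scli_charpoly:
  "poly (scli_charpoly al be p \<eta>) z = z ^ p - (\<Sum>j<p. (of_real (al j) * \<eta> + of_real (be j)) * z ^ j)"
  by (simp add: scli_charpoly_def poly_monom poly_sum)

lemma coeff_scli_charpoly:
  "coeff (scli_charpoly al be p \<eta>) n =
     (if n = p then 1 else 0) - (if n < p then of_real (al n) * \<eta> + of_real (be n) else 0)"
proof -
  have "(\<Sum>j<p. coeff (monom (of_real (al j) * \<eta> + of_real (be j)) j) n) =
      (\<Sum>j<p. if j = n then of_real (al j) * \<eta> + of_real (be j) else 0)"
    by (intro sum.cong) (auto simp: coeff_monom)
  then show ?thesis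
    by (simp add: scli_charpoly_def coeff_sum coeff_monom sum.delta)
qed

lemma degree_scli_charpoly: "degree (scli_charpoly al be p \<eta>) = p"
  and lead_coeff_scli_charpoly: "lead_coeff (scli_charpoly al be p \<eta>) = 1"
proof -
  have "degree (scli_charpoly al be p \<eta>) \<le> p"
    by (rule degree_le) (auto simp: coeff_scli_charpoly)
  moreover have "p \<le> degree (scli_charpoly al be p \<eta>)"
    by (rule le_degree) (simp add: coeff_scli_charpoly)
  ultimately show degree: "degree (scli_charpoly al be p \<eta>) = p"
    by simp
  show "lead_coeff (scli_charpoly al be p \<eta>) = 1"
    by (simp add: degree coeff_scli_charpoly)
qed

lemma scli_charpoly_splits:
  obtains r where "scli_charpoly al be p \<eta> = (\<Prod>i<p. [:-r i, 1:])"
  using complex_poly_decompose'[of "scli_charpoly al be p \<eta>"]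
  by (metis degree_scli_charpoly lead_coeff_scli_charpoly smult_1_left)

lemma scli_charpoly_at_1:
  shows "poly (scli_charpoly al be p \<eta>) 1 = of_real (1 - (\<Sum>j<p. be j)) - \<eta> * of_real (\<Sum>j<p. al j)"
    and "poly (pderiv (scli_charpoly al be p \<eta>)) 1 =
           of_real (real p - (\<Sum>j<p. real j * be j)) - \<eta> * of_real (\<Sum>j<p. real j * al j)"
    and "poly (pderiv (pderiv (scli_charpoly al be p \<eta>))) 1 =
           of_real (real (p - 1) * real p - (\<Sum>j<p. real (j - 1) * real j * be j))
           - \<eta> * of_real (\<Sum>j<p. real (j - 1) * real j * al j)"
  by (simp_all add: scli_charpoly_def pderiv_diff pderiv_sum pderiv_monom poly_sum poly_monom
      sum_subtractf sum_distrib_left sum.distrib algebra_simps)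

lemma scli_charpoly_root_trajectory:
  assumes "poly (scli_charpoly al be p \<eta>) z = 0"
  shows "c * z ^ (n + p) = (\<Sum>j<p. al j *\<^sub>R (\<eta> * (c * z ^ (n + j))) + be j *\<^sub>R (c * z ^ (n + j)))"
proof -
  have "z ^ p = (\<Sum>j<p. (of_real (al j) * \<eta> + of_real (be j)) * z ^ j)"
    using assms by (simp add: poly_scli_charpoly)
  then have "c * z ^ (n + p) = (\<Sum>j<p. c * z ^ n * ((of_real (al j) * \<eta> + of_real (be j)) * z ^ j))"
    by (simp add: power_add sum_distrib_left mult.assoc)
  then show ?thesis
    by (simp add: scaleR_conv_of_real power_add algebra_simps)
qed

lemma scli_charpoly_root_sums:
  fixes al be :: "nat \<Rightarrow> real" and p :: nat and \<mu> :: real and r :: "nat \<Rightarrow> complex"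
  defines "P \<equiv> scli_charpoly al be p (- \<i> * of_real \<mu>)"
    and "a \<equiv> \<Sum>j<p. al j" and "a' \<equiv> \<Sum>j<p. real j * al j"
    and "d \<equiv> real p - (\<Sum>j<p. real j * be j)"
    and "A2 \<equiv> \<Sum>j<p. real (j - 1) * real j * al j"
  assumes consistent: "(\<Sum>j<p. be j) = 1" and "0 < \<mu>" and "a \<noteq> 0"
    and splits: "P = (\<Prod>i<p. [:-r i, 1:])" and not_one: "\<And>i. i < p \<Longrightarrow> r i \<noteq> 1"
  shows "(\<Sum>i<p. 1 / (1 - r i)) = of_real (a' / a) - \<i> * of_real (d / (\<mu> * a))"
    and "Re (\<Sum>i<p. \<Sum>j\<in>{..<p}-{i}. 1 / (1 - r i) * (1 / (1 - r j))) = A2 / a"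
    and "(\<Prod>i<p. 1 - r i) = \<i> * of_real (\<mu> * a)"
proof -
  note prod_formulas = poly_pderiv_prod_linear[of p r 1, OF not_one, folded splits]
  define Q2 where "Q2 = real (p - 1) * real p - (\<Sum>j<p. real (j - 1) * real j * be j)"
  note at_1 = scli_charpoly_at_1[of al be p "- \<i> * of_real \<mu>", folded P_def a_def a'_def d_def A2_def Q2_def]
  have P1: "poly P 1 = \<i> * of_real (\<mu> * a)"
    using at_1(1) consistent by simp
  have P'1: "poly (pderiv P) 1 = of_real d + \<i> * of_real (\<mu> * a')"
    using at_1(2) by simp
  have P''1: "poly (pderiv (pderiv P)) 1 = of_real Q2 + \<i> * of_real (\<mu> * A2)"
    using at_1(3) by simp
  have quotient: "(of_real x + \<i> * of_real (\<mu> * y)) / (\<i> * of_real (\<mu> * a)) =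
      of_real (y / a) - \<i> * of_real (x / (\<mu> * a))" for x y :: real
    using \<open>0 < \<mu>\<close> \<open>a \<noteq> 0\<close> by (subst divide_eq_eq) (simp add: complex_eq_iff field_simps)
  have "(\<Sum>i<p. 1 / (1 - r i)) = poly (pderiv P) 1 / poly P 1"
    using prod_formulas(2) P1 \<open>0 < \<mu>\<close> \<open>a \<noteq> 0\<close> by simp
  also have "\<dots> = of_real (a' / a) - \<i> * of_real (d / (\<mu> * a))"
    unfolding P'1 P1 by (rule quotient)
  finally show "(\<Sum>i<p. 1 / (1 - r i)) = of_real (a' / a) - \<i> * of_real (d / (\<mu> * a))" .
  have "(\<Sum>i<p. \<Sum>j\<in>{..<p}-{i}. 1 / (1 - r i) * (1 / (1 - r j))) = poly (pderiv (pderiv P)) 1 / poly P 1"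
    using prod_formulas(3) P1 \<open>0 < \<mu>\<close> \<open>a \<noteq> 0\<close> by simp
  also have "\<dots> = of_real (A2 / a) - \<i> * of_real (Q2 / (\<mu> * a))"
    unfolding P''1 P1 by (rule quotient)
  finally show "Re (\<Sum>i<p. \<Sum>j\<in>{..<p}-{i}. 1 / (1 - r i) * (1 / (1 - r j))) = A2 / a"
    by simp
  show "(\<Prod>i<p. 1 - r i) = \<i> * of_real (\<mu> * a)"
    using prod_formulas(1) P1 by simp
qed

lemma scli_charpoly_root_cases:
  fixes al be :: "nat \<Rightarrow> real" and p :: nat and \<mu> :: real
  defines "P \<equiv> scli_charpoly al be p (- \<i> * of_real \<mu>)"
    and "a \<equiv> \<Sum>j<p. al j" and "a' \<equiv> \<Sum>j<p. real j * al j"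
    and "d \<equiv> real p - (\<Sum>j<p. real j * be j)"
    and "A2 \<equiv> \<Sum>j<p. real (j - 1) * real j * al j"
  assumes "(\<Sum>j<p. be j) = 1" and "0 < \<mu>" and "a \<noteq> 0"
  obtains (outside) z where "poly P z = 0" "1 \<le> cmod z"
  | (inside) r where "\<forall>i<p. cmod (r i) < 1" "\<forall>i<p. poly P (r i) = 0"
      "(\<Sum>i<p. 1 / (1 - r i)) = of_real (a' / a) - \<i> * of_real (d / (\<mu> * a))"
      "Re (\<Sum>i<p. \<Sum>j\<in>{..<p}-{i}. 1 / (1 - r i) * (1 / (1 - r j))) = A2 / a"
      "(\<Prod>i<p. 1 - r i) = \<i> * of_real (\<mu> * a)"
proof -
  obtain r where P: "P = (\<Prod>i<p. [:-r i, 1:])"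
    using scli_charpoly_splits P_def by metis
  have roots: "poly P (r i) = 0" if "i < p" for i
    using that by (auto simp: P poly_prod)
  show ?thesis
  proof (cases "\<exists>i<p. 1 \<le> cmod (r i)")
    case True
    then show ?thesis
      using that(1) roots by blast
  next
    case False
    then have disc: "\<forall>i<p. cmod (r i) < 1"
      by auto
    then have "\<And>i. i < p \<Longrightarrow> r i \<noteq> 1"
      by fastforce
    from scli_charpoly_root_sums[OF assms(6-7) \<open>a \<noteq> 0\<close>[unfolded a_def] P[unfolded P_def] this,
        folded a_def a'_def d_def A2_def]
    show ?thesis
      using that(2) disc roots by blast
  qed
qed

lemma scli_charpoly_root_near_unit_circle_nondegenerate:
  fixes al be :: "nat \<Rightarrow> real" and p :: nat and \<mu> :: real
  defines "a \<equiv> \<Sum>j<p. al j" and "a' \<equiv> \<Sum>j<p. real j * al j"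
    and "d \<equiv> real p - (\<Sum>j<p. real j * be j)"
  defines "C \<equiv> 2 * real p ^ 2 * \<bar>a * a'\<bar> / d ^ 2 + 1"
  assumes consistent: "(\<Sum>j<p. be j) = 1" and "a \<noteq> 0" and "d \<noteq> 0" and "0 < \<mu>"
  shows "\<exists>z. poly (scli_charpoly al be p (- \<i> * of_real \<mu>)) z = 0 \<and> 1 - C * \<mu> ^ 2 \<le> cmod z ^ 2"
proof -
  have "0 \<le> C * \<mu> ^ 2"
    by (simp add: C_def)
  from consistent \<open>0 < \<mu>\<close> \<open>a \<noteq> 0\<close>[unfolded a_def] show ?thesis
  proof (cases rule: scli_charpoly_root_cases[of be p \<mu> al])
    case (outside z)
    then show ?thesis
      using \<open>0 \<le> C * \<mu> ^ 2\<close> by (smt (verit) one_le_power)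
  next
    case (inside r)
    note sum_inverse = inside(3)[folded a_def a'_def d_def]
    define m where "m = \<bar>d\<bar> / (\<mu> * \<bar>a\<bar>)"
    have "0 < m" "m \<le> \<bar>Im (\<Sum>i<p. 1 / (1 - r i))\<bar>"
      using sum_inverse \<open>0 < \<mu>\<close> \<open>a \<noteq> 0\<close> \<open>d \<noteq> 0\<close> by (simp_all add: m_def abs_mult)
    then obtain i where "i < p" and
      near: "1 - cmod (r i) ^ 2 \<le> 2 * real p ^ 2 * Re (\<Sum>i<p. 1 / (1 - r i)) / m ^ 2"
      using unit_disc_near_circle_of_large_Im_sum inside(1) by blast
    note near
    also have "\<dots> = 2 * real p ^ 2 * (a * a') / d ^ 2 * \<mu> ^ 2"
    proof -
      have "Re (\<Sum>i<p. 1 / (1 - r i)) = a' / a"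
        using sum_inverse by simp
      then show ?thesis
        using \<open>0 < \<mu>\<close> \<open>a \<noteq> 0\<close> \<open>d \<noteq> 0\<close>
        by (simp add: m_def power_divide power_mult_distrib field_simps power2_eq_square)
    qed
    also have "\<dots> \<le> C * \<mu> ^ 2"
    proof -
      have "2 * real p ^ 2 * (a * a') \<le> 2 * real p ^ 2 * \<bar>a * a'\<bar>"
        by (intro mult_left_mono) auto
      then have "2 * real p ^ 2 * (a * a') / d ^ 2 \<le> C"
        unfolding C_def by (smt (verit) divide_right_mono zero_le_power2)
      then show ?thesis
        by (intro mult_right_mono) auto
    qed
    finally show ?thesis
      using inside(2) \<open>i < p\<close> by (auto simp: algebra_simps)
  qed
qed

lemma scli_charpoly_root_outside_disc_degenerate:
  fixes al be :: "nat \<Rightarrow> real" and p :: nat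
  assumes consistent: "(\<Sum>j<p. be j) = 1" and a: "(\<Sum>j<p. al j) \<noteq> 0"
    and d: "real p - (\<Sum>j<p. real j * be j) = 0"
  shows "\<exists>\<mu>0>0. \<forall>\<mu>. 0 < \<mu> \<and> \<mu> \<le> \<mu>0 \<longrightarrow>
           (\<exists>z. poly (scli_charpoly al be p (- \<i> * of_real \<mu>)) z = 0 \<and> 1 \<le> cmod z)"
proof -
  define a where "a = (\<Sum>j<p. al j)"
  define a' where "a' = (\<Sum>j<p. real j * al j)"
  define A2 where "A2 = (\<Sum>j<p. real (j - 1) * real j * al j)"
  define K where "K = (real p + 1) * (a' / a) ^ 2 + \<bar>A2 / a\<bar>"
  define \<mu>0 where "\<mu>0 = 1 / (a ^ 2 * K ^ p + 1)"
  have "0 \<le> K"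
    by (simp add: K_def)
  then have "0 \<le> a ^ 2 * K ^ p"
    by simp
  then have "0 < \<mu>0" "\<mu>0 \<le> 1" "\<mu>0 * (a ^ 2 * K ^ p) < 1"
    by (simp_all add: \<mu>0_def field_simps)
  have "\<exists>z. poly (scli_charpoly al be p (- \<i> * of_real \<mu>)) z = 0 \<and> 1 \<le> cmod z"
    if "0 < \<mu>" "\<mu> \<le> \<mu>0" for \<mu>
    using consistent \<open>0 < \<mu>\<close> a
  proof (cases rule: scli_charpoly_root_cases[of be p \<mu> al])
    case (inside r)
    (* roots all inside the disc would force 1 / (mu a)^2 = prod_i |1 / (1 - r i)|^2 <= K^p *)
    define u where "u i = 1 / (1 - r i)" for i
    have "(\<Sum>i<p. u i) = of_real (a' / a)"
      using inside(3) d by (simp add: u_def a_def a'_def)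
    then have "cmod (u i) ^ 2 \<le> K" if "i < p" for i
      using inverse_one_minus_norm_bound[OF inside(1), of "a' / a" i] inside(4) that
      by (simp add: u_def K_def a_def A2_def)
    then have "(\<Prod>i<p. cmod (u i) ^ 2) \<le> K ^ p"
      using prod_mono[of "{..<p}" "\<lambda>i. cmod (u i) ^ 2" "\<lambda>_. K"] by simp
    moreover have "(\<Prod>i<p. cmod (u i) ^ 2) = 1 / cmod (\<Prod>i<p. 1 - r i) ^ 2"
      by (simp add: u_def norm_divide power_divide prod_dividef prod_norm[symmetric] prod_power_distrib)
    moreover have "cmod (\<Prod>i<p. 1 - r i) ^ 2 = (\<mu> * a) ^ 2"
      using inside(5)[folded a_def] by (simp add: norm_mult power_mult_distrib)
    ultimately have "1 \<le> \<mu> ^ 2 * (a ^ 2 * K ^ p)"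
      using \<open>0 < \<mu>\<close> a by (simp add: a_def field_simps power_mult_distrib)
    also have "\<dots> \<le> \<mu>0 * (a ^ 2 * K ^ p)"
      using that \<open>\<mu>0 \<le> 1\<close> \<open>0 \<le> K\<close> by (intro mult_right_mono) (auto simp: power2_eq_square
          intro: order_trans[OF mult_left_le_one_le])
    finally show ?thesis
      using \<open>\<mu>0 * (a ^ 2 * K ^ p) < 1\<close> by simp
  qed blast
  then show ?thesis
    using \<open>0 < \<mu>0\<close> by blast
qed

lemma scli_charpoly_root_near_unit_circle:
  fixes al be :: "nat \<Rightarrow> real" and p :: nat
  assumes consistent: "(\<Sum>j<p. be j) = 1"
  shows "\<exists>C>0. \<exists>\<mu>0>0. \<forall>\<mu>. 0 < \<mu> \<and> \<mu> \<le> \<mu>0 \<longrightarrow>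
           (\<exists>z. poly (scli_charpoly al be p (- \<i> * of_real \<mu>)) z = 0 \<and> 1 - C * \<mu> ^ 2 \<le> cmod z ^ 2)"
proof -
  consider "(\<Sum>j<p. al j) = 0"
    | "(\<Sum>j<p. al j) \<noteq> 0" "real p - (\<Sum>j<p. real j * be j) \<noteq> 0"
    | "(\<Sum>j<p. al j) \<noteq> 0" "real p - (\<Sum>j<p. real j * be j) = 0"
    by blast
  then show ?thesis
  proof cases
    case 1
    then have "poly (scli_charpoly al be p (- \<i> * of_real \<mu>)) 1 = 0" for \<mu>
      using consistent scli_charpoly_at_1(1)[of al be p] by simp
    then show ?thesis
      by (intro exI[of _ 1] conjI allI impI) auto
  next
    case 2
    then show ?thesis
      using scli_charpoly_root_near_unit_circle_nondegenerate[OF consistent]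
      by (intro exI[of _ "2 * real p ^ 2 * \<bar>(\<Sum>j<p. al j) * (\<Sum>j<p. real j * al j)\<bar>
            / (real p - (\<Sum>j<p. real j * be j)) ^ 2 + 1"] conjI exI[of _ 1]) (auto intro: add_nonneg_pos)
  next
    case 3
    then obtain \<mu>0 where "0 < \<mu>0" and outside: "\<forall>\<mu>. 0 < \<mu> \<and> \<mu> \<le> \<mu>0 \<longrightarrow>
        (\<exists>z. poly (scli_charpoly al be p (- \<i> * of_real \<mu>)) z = 0 \<and> 1 \<le> cmod z)"
      using scli_charpoly_root_outside_disc_degenerate[OF consistent] by blast
    have "1 - 1 * \<mu> ^ 2 \<le> cmod z ^ 2" if "1 \<le> cmod z" for z :: complex and \<mu> :: real
      using that by (smt (verit) one_le_power zero_le_power2)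
    with outside have "\<forall>\<mu>. 0 < \<mu> \<and> \<mu> \<le> \<mu>0 \<longrightarrow>
        (\<exists>z. poly (scli_charpoly al be p (- \<i> * of_real \<mu>)) z = 0 \<and> 1 - 1 * \<mu> ^ 2 \<le> cmod z ^ 2)"
      by meson
    with \<open>0 < \<mu>0\<close> show ?thesis
      by (intro exI[of _ 1] conjI exI[of _ \<mu>0]) simp_all
  qed
qed

section \<open>One-dimensional instances\<close>

lemma half_le_normalized_power:
  fixes x :: real and T p :: nat
  assumes "0 \<le> x" and near: "1 - 1 / (4 * real T) \<le> x ^ 2" and "1 \<le> p" and "p \<le> T"
  shows "1 / 2 \<le> x ^ (T + p - 1) / max 1 x ^ (p - 1)"
proof (cases "1 \<le> x")
  case True
  have "T + p - 1 = T + (p - 1)"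
    using \<open>1 \<le> p\<close> by simp
  then have "x ^ (T + p - 1) / max 1 x ^ (p - 1) = x ^ T"
    using True by (simp add: power_add)
  then show ?thesis
    using one_le_power[OF True, of T] by linarith
next
  case False
  define N where "N = T + p - 1"
  have "0 < T"
    using assms by simp
  have "1 - real N / (4 * real T) = 1 + real N * (- (1 / (4 * real T)))"
    by simp
  also have "\<dots> \<le> (1 + - (1 / (4 * real T))) ^ N"
    using \<open>0 < T\<close> by (intro Bernoulli_inequality) (simp add: field_simps)
  also have "\<dots> \<le> (x ^ 2) ^ N"
    using near \<open>0 < T\<close> by (intro power_mono) (auto simp: field_simps)
  finally have "1 - real N / (4 * real T) \<le> (x ^ N) ^ 2"
    by (simp add: power_mult[symmetric] mult.commute)
  moreover have "real N / (4 * real T) \<le> 1 / 2"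
    using assms \<open>0 < T\<close> by (simp add: N_def field_simps)
  ultimately have "(1 / 2) ^ 2 \<le> (x ^ N) ^ 2"
    by (simp add: power2_eq_square)
  then have "1 / 2 \<le> x ^ N"
    using \<open>0 \<le> x\<close> by (simp add: power2_le_iff_abs_le)
  then show ?thesis
    using False by (simp add: N_def)
qed

(* In the coordinate w = x + i y along a line, the operator of f(x, y) = mu (x - Re ws) (y - Im ws). *)
definition bilinear_game_op :: "real \<Rightarrow> complex \<Rightarrow> complex \<Rightarrow> complex" where
  "bilinear_game_op \<mu> ws w = - \<i> * of_real \<mu> * (w - ws)"

(* W n plays the role of the iterate z^(n - p + 1); its first p values are the initial points. *)
definition scalar_instance ::
    "(nat \<Rightarrow> real) \<Rightarrow> (nat \<Rightarrow> real) \<Rightarrow> nat \<Rightarrow> real \<Rightarrow> real \<Rightarrow> real \<Rightarrow> complex \<Rightarrow> (nat \<Rightarrow> complex) \<Rightarrow> bool" where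
  "scalar_instance al be p l D \<mu> ws W \<longleftrightarrow>
     0 < \<mu> \<and> \<mu> \<le> l \<and> \<bar>Re ws\<bar> \<le> D \<and> \<bar>Im ws\<bar> \<le> D \<and> (\<forall>j<p. cmod (W j) \<le> D) \<and>
     (\<forall>n. W (n + p) = (\<Sum>j<p. al j *\<^sub>R bilinear_game_op \<mu> ws (W (n + j)) + be j *\<^sub>R W (n + j)))"

lemma scalar_instance_fixed_point:
  assumes inconsistent: "(\<Sum>j<p. be j) \<noteq> 1" and "0 < l" and "0 < D"
  shows "\<exists>w. scalar_instance al be p l D l (of_real D) (\<lambda>_. w) \<and> w \<noteq> of_real D"
proof -
  define s where "s = (\<Sum>j<p. be j)"
  define a where "a = (\<Sum>j<p. al j)"
  define den where "den = of_real (1 - s) + \<i> * of_real (l * a)"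
  define w where "w = \<i> * of_real (l * a) * of_real D / den"
  have "den \<noteq> 0"
    using inconsistent by (auto simp: den_def s_def complex_eq_iff)
  then have w: "w * den = \<i> * of_real (l * a) * of_real D"
    by (simp add: w_def)
  have "(\<Sum>j<p. al j *\<^sub>R bilinear_game_op l (of_real D) w + be j *\<^sub>R w) =
      a *\<^sub>R bilinear_game_op l (of_real D) w + s *\<^sub>R w"
    by (simp add: a_def s_def sum.distrib scaleR_sum_left)
  also have "\<dots> = w"
    using w by (simp add: bilinear_game_op_def den_def scaleR_conv_of_real algebra_simps)
  finally have fixed: "(\<Sum>j<p. al j *\<^sub>R bilinear_game_op l (of_real D) w + be j *\<^sub>R w) = w" .
  have "cmod w \<le> D"
  proof -
    have "\<bar>l * a\<bar> \<le> cmod den"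
      using abs_Im_le_cmod[of den] by (simp add: den_def)
    then have "\<bar>l * a\<bar> * D \<le> cmod den * D"
      using \<open>0 < D\<close> by (intro mult_right_mono) auto
    then show ?thesis
      using \<open>0 < D\<close> \<open>den \<noteq> 0\<close> by (simp add: w_def norm_mult norm_divide abs_mult field_simps)
  qed
  moreover have "w \<noteq> of_real D"
  proof
    assume "w = of_real D"
    then have "den = \<i> * of_real (l * a)"
      using w \<open>0 < D\<close> by (simp add: mult.commute)
    then show False
      using inconsistent by (simp add: den_def s_def complex_eq_iff)
  qed
  ultimately show ?thesis
    using fixed \<open>0 < l\<close> \<open>0 < D\<close> by (auto simp: scalar_instance_def)
qed

lemma scalar_instance_of_root:
  assumes z: "poly (scli_charpoly al be p (- \<i> * of_real \<mu>)) z = 0"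
    and near: "1 - 1 / (4 * real T) \<le> cmod z ^ 2" and "1 \<le> p" and "p \<le> T"
    and "0 < \<mu>" and "\<mu> \<le> l" and "0 < D"
  shows "\<exists>W. scalar_instance al be p l D \<mu> 0 W \<and> D / 2 \<le> cmod (W (T + p - 1))"
proof -
  define W where "W n = of_real (D / max 1 (cmod z) ^ (p - 1)) * z ^ n" for n
  have norm_W: "cmod (W n) = D * (cmod z ^ n / max 1 (cmod z) ^ (p - 1))" for n
    unfolding W_def norm_mult norm_power norm_of_real using \<open>0 < D\<close> by simp
  have "cmod (W j) \<le> D" if "j < p" for j
  proof -
    have "cmod z ^ j \<le> max 1 (cmod z) ^ (p - 1)"
      using that by (intro order_trans[OF power_mono power_increasing]) auto
    then have "cmod z ^ j / max 1 (cmod z) ^ (p - 1) \<le> 1"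
      by (simp add: divide_le_eq_1)
    from mult_left_le[OF this, of D] show ?thesis
      using \<open>0 < D\<close> unfolding norm_W by simp
  qed
  moreover have "W (n + p) = (\<Sum>j<p. al j *\<^sub>R bilinear_game_op \<mu> 0 (W (n + j)) + be j *\<^sub>R W (n + j))"
    for n
    unfolding W_def bilinear_game_op_def
    using scli_charpoly_root_trajectory[OF z] by (simp add: mult.assoc)
  moreover have "D / 2 \<le> cmod (W (T + p - 1))"
    using mult_left_mono[OF half_le_normalized_power[OF norm_ge_zero near \<open>1 \<le> p\<close> \<open>p \<le> T\<close>], of D]
      \<open>0 < D\<close>
    unfolding norm_W by simp
  ultimately show ?thesis
    using assms by (auto simp: scalar_instance_def)
qed

lemma scalar_instance_geometric:
  assumes consistent: "(\<Sum>j<p. be j) = 1" and "1 \<le> p" and "0 < l" and "0 < D"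
  shows "\<exists>\<mu>1>0. \<forall>T::nat. p \<le> T \<longrightarrow>
           (\<exists>W. scalar_instance al be p l D (\<mu>1 / sqrt T) 0 W \<and> D / 2 \<le> cmod (W (T + p - 1)))"
proof -
  obtain C \<mu>0 where "0 < C" "0 < \<mu>0" and root: "\<And>\<mu>. 0 < \<mu> \<Longrightarrow> \<mu> \<le> \<mu>0 \<Longrightarrow>
      \<exists>z. poly (scli_charpoly al be p (- \<i> * of_real \<mu>)) z = 0 \<and> 1 - C * \<mu> ^ 2 \<le> cmod z ^ 2"
    using scli_charpoly_root_near_unit_circle[OF consistent] by blast
  define \<mu>1 where "\<mu>1 = min \<mu>0 (min l (1 / (4 * C + 1)))"
  have "0 < \<mu>1" "\<mu>1 \<le> \<mu>0" "\<mu>1 \<le> l"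
    using \<open>0 < \<mu>0\<close> \<open>0 < l\<close> \<open>0 < C\<close> by (auto simp: \<mu>1_def)
  have "C * \<mu>1 ^ 2 \<le> 1 / 4"
  proof -
    have "\<mu>1 \<le> 1 / (4 * C + 1)" "1 / (4 * C + 1) \<le> 1"
      using \<open>0 < C\<close> by (auto simp: \<mu>1_def)
    then have "\<mu>1 ^ 2 \<le> 1 / (4 * C + 1)"
      using \<open>0 < \<mu>1\<close> by (smt (verit) mult_left_le_one_le power2_eq_square)
    then have "C * \<mu>1 ^ 2 \<le> C * (1 / (4 * C + 1))"
      using \<open>0 < C\<close> by (intro mult_left_mono) auto
    also have "\<dots> \<le> 1 / 4"
      using \<open>0 < C\<close> by (simp add: field_simps)
    finally show ?thesis .
  qed
  have "\<exists>W. scalar_instance al be p l D (\<mu>1 / sqrt T) 0 W \<and> D / 2 \<le> cmod (W (T + p - 1))"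
    if "p \<le> T" for T :: nat
  proof -
    define \<mu> where "\<mu> = \<mu>1 / sqrt T"
    have "1 \<le> sqrt T"
      using that \<open>1 \<le> p\<close> by simp
    then have "0 < \<mu>" "\<mu> \<le> \<mu>1"
      using \<open>0 < \<mu>1\<close> by (auto simp: \<mu>_def divide_le_eq)
    then obtain z where z: "poly (scli_charpoly al be p (- \<i> * of_real \<mu>)) z = 0"
      and near: "1 - C * \<mu> ^ 2 \<le> cmod z ^ 2"
      using root \<open>\<mu>1 \<le> \<mu>0\<close> by force
    have "C * \<mu> ^ 2 = C * \<mu>1 ^ 2 / T"
      using that \<open>1 \<le> p\<close> by (simp add: \<mu>_def power_divide)
    also have "\<dots> \<le> (1 / 4) / T"
      using \<open>C * \<mu>1 ^ 2 \<le> 1 / 4\<close> by (intro divide_right_mono) auto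
    finally have "1 - 1 / (4 * real T) \<le> cmod z ^ 2"
      using near by linarith
    then show ?thesis
      unfolding \<mu>_def[symmetric]
      using scalar_instance_of_root[OF z _ \<open>1 \<le> p\<close> that \<open>0 < \<mu>\<close>] \<open>\<mu> \<le> \<mu>1\<close> \<open>\<mu>1 \<le> l\<close> \<open>0 < D\<close>
      by simp
  qed
  then show ?thesis
    using \<open>0 < \<mu>1\<close> by blast
qed

lemma scalar_lower_bound:
  assumes "0 < l" and "0 < D" and "1 \<le> p"
  shows "\<exists>c>0. \<exists>TA>0. \<forall>T::nat. TA \<le> real T \<longrightarrow>
           (\<exists>\<mu> ws W. scalar_instance al be p l D \<mu> ws W \<and>
              c * l * D\<^sup>2 / sqrt T \<le> D * \<mu> * cmod (W (T + p - 1) - ws))"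
proof (cases "(\<Sum>j<p. be j) = 1")
  case False
  then obtain w where w: "scalar_instance al be p l D l (of_real D) (\<lambda>_. w)" and "w \<noteq> of_real D"
    using scalar_instance_fixed_point \<open>0 < l\<close> \<open>0 < D\<close> by blast
  define c where "c = cmod (w - of_real D) / D"
  have "0 < c"
    using \<open>w \<noteq> of_real D\<close> \<open>0 < D\<close> by (simp add: c_def)
  have "c * l * D\<^sup>2 / sqrt T \<le> D * l * cmod (w - of_real D)" if "1 \<le> real T" for T :: nat
  proof -
    have "1 \<le> sqrt T" "0 \<le> c * l * D\<^sup>2"
      using that \<open>0 < c\<close> \<open>0 < l\<close> by simp_all
    then have "c * l * D\<^sup>2 / sqrt T \<le> c * l * D\<^sup>2"
      using divide_left_mono[of 1 "sqrt T" "c * l * D\<^sup>2"] by simp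
    also have "\<dots> = D * l * cmod (w - of_real D)"
      using \<open>0 < D\<close> by (simp add: c_def power2_eq_square)
    finally show ?thesis .
  qed
  then show ?thesis
    using \<open>0 < c\<close> w by (intro exI[of _ c] conjI exI[of _ 1]) auto
next
  case True
  then obtain \<mu>1 where "0 < \<mu>1" and geometric: "\<And>T::nat. p \<le> T \<Longrightarrow>
      \<exists>W. scalar_instance al be p l D (\<mu>1 / sqrt T) 0 W \<and> D / 2 \<le> cmod (W (T + p - 1))"
    using scalar_instance_geometric assms by blast
  define c where "c = \<mu>1 / (2 * l)"
  have "0 < c"
    using \<open>0 < \<mu>1\<close> \<open>0 < l\<close> by (simp add: c_def)
  have "\<exists>\<mu> ws W. scalar_instance al be p l D \<mu> ws W \<and>
      c * l * D\<^sup>2 / sqrt T \<le> D * \<mu> * cmod (W (T + p - 1) - ws)" if T: "real p \<le> real T" for T :: nat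
  proof -
    obtain W where W: "scalar_instance al be p l D (\<mu>1 / sqrt T) 0 W"
      and half: "D / 2 \<le> cmod (W (T + p - 1))"
      using geometric T by auto
    have "c * l * D\<^sup>2 / sqrt T = D * (\<mu>1 / sqrt T) * (D / 2)"
      using \<open>0 < l\<close> by (simp add: c_def power2_eq_square mult_ac)
    also have "\<dots> \<le> D * (\<mu>1 / sqrt T) * cmod (W (T + p - 1) - 0)"
      using half \<open>0 < D\<close> \<open>0 < \<mu>1\<close> by (intro mult_left_mono) auto
    finally show ?thesis
      using W by blast
  qed
  then show ?thesis
    using \<open>0 < c\<close> \<open>1 \<le> p\<close> by (intro exI[of _ c] conjI exI[of _ "real p"]) auto
qed

section \<open>Embedding into bilinear games\<close>

lemma mat_mult_vec: "mat \<mu> *v (y :: real^'m::finite) = \<mu> *\<^sub>R y"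
proof -
  have "(\<Sum>j\<in>UNIV. (if i = j then \<mu> else 0) * y $ j) = \<mu> * y $ i" for i
    by (simp add: if_distrib[of "\<lambda>a. a * y $ _"] cong: if_cong)
  then show ?thesis
    by (simp add: vec_eq_iff mat_def matrix_vector_mult_def)
qed

lemma bil_F_mat:
  fixes xs ys :: "real^'m::finite"
  shows "bil_F (mat \<mu>) (- (\<mu> *\<^sub>R ys)) (- (\<mu> *\<^sub>R xs)) (x, y) = (\<mu> *\<^sub>R (y - ys), - (\<mu> *\<^sub>R (x - xs)))"
  by (simp add: bil_F_def mat_mult_vec algebra_simps)

lemma in_Fbil_mat:
  fixes xs ys :: "real^'m::finite"
  assumes "0 < \<mu>" "\<mu> \<le> l" and "norm xs \<le> D" "norm ys \<le> D"
  shows "in_Fbil l D (mat \<mu>) (- (\<mu> *\<^sub>R ys)) (- (\<mu> *\<^sub>R xs)) (bil_F (mat \<mu>) (- (\<mu> *\<^sub>R ys)) (- (\<mu> *\<^sub>R xs)))"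
proof -
  let ?F = "bil_F (mat \<mu>) (- (\<mu> *\<^sub>R ys)) (- (\<mu> *\<^sub>R xs))"
  have zero: "?F z = 0 \<longleftrightarrow> z = (xs, ys)" for z
    using \<open>0 < \<mu>\<close> by (cases z) (auto simp: bil_F_mat zero_prod_def)
  have "dist (?F z) (?F z') = \<mu> * dist z z'" for z z'
  proof (cases z; cases z')
    fix x y x' y'
    assume z: "z = (x, y)" "z' = (x', y')"
    then have "?F z - ?F z' = \<mu> *\<^sub>R (y - y', x' - x)"
      by (simp add: bil_F_mat algebra_simps)
    then show ?thesis
      using z \<open>0 < \<mu>\<close>
      by (simp add: dist_norm norm_Pair norm_minus_commute add.commute power_mult_distrib real_sqrt_mult
          flip: distrib_left)
  qed
  then have "l-lipschitz_on UNIV ?F"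
    using assms by (intro lipschitz_onI) (auto intro: mult_right_mono)
  then show ?thesis
    unfolding in_Fbil_def using zero assms by (auto simp: domD_def)
qed

lemma SUP_INF_affine_cball:
  fixes c :: "'a::real_inner"
  assumes "0 \<le> R"
  shows "(SUP y\<in>cball 0 R. c \<bullet> y + e) = R * norm c + e"
    and "(INF y\<in>cball 0 R. c \<bullet> y + e) = e - R * norm c"
proof -
  define y0 where "y0 = (R / norm c) *\<^sub>R c"
  have "y0 \<in> cball 0 R" "- y0 \<in> cball 0 R"
    using assms by (auto simp: y0_def)
  have "c \<bullet> y0 = R * norm c"
    by (cases "c = 0") (simp_all add: y0_def power2_norm_eq_inner[symmetric] power2_eq_square)
  have bound: "\<bar>c \<bullet> y\<bar> \<le> R * norm c" if "y \<in> cball 0 R" for y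
    using Cauchy_Schwarz_ineq2[of c y] that mult_left_mono[of "norm y" R "norm c"]
    by (simp add: mult.commute)
  show "(SUP y\<in>cball 0 R. c \<bullet> y + e) = R * norm c + e"
  proof (rule cSup_eq_maximum)
    show "R * norm c + e \<in> (\<lambda>y. c \<bullet> y + e) ` cball 0 R"
      using \<open>y0 \<in> cball 0 R\<close> \<open>c \<bullet> y0 = R * norm c\<close> by (intro image_eqI[of _ _ y0]) auto
  qed (use bound in fastforce)
  show "(INF y\<in>cball 0 R. c \<bullet> y + e) = e - R * norm c"
  proof (rule cInf_eq_minimum)
    show "e - R * norm c \<in> (\<lambda>y. c \<bullet> y + e) ` cball 0 R"
      using \<open>- y0 \<in> cball 0 R\<close> \<open>c \<bullet> y0 = R * norm c\<close> by (intro image_eqI[of _ _ "- y0"]) auto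
  qed (use bound in fastforce)
qed

lemma bil_gap_mat:
  fixes xs ys x y :: "real^'m::finite"
  assumes "0 \<le> R"
  shows "bil_gap (mat \<mu>) (- (\<mu> *\<^sub>R ys)) (- (\<mu> *\<^sub>R xs)) R (x, y) =
           R * \<bar>\<mu>\<bar> * (norm (x - xs) + norm (y - ys)) + \<mu> * (xs \<bullet> y - ys \<bullet> x)"
proof -
  have f_x: "bil_f (mat \<mu>) (- (\<mu> *\<^sub>R ys)) (- (\<mu> *\<^sub>R xs)) x y' = (\<mu> *\<^sub>R (x - xs)) \<bullet> y' + - \<mu> * (ys \<bullet> x)"
    for y'
    by (simp add: bil_f_def mat_mult_vec inner_diff_left algebra_simps)
  have f_y: "bil_f (mat \<mu>) (- (\<mu> *\<^sub>R ys)) (- (\<mu> *\<^sub>R xs)) x' y = (\<mu> *\<^sub>R (y - ys)) \<bullet> x' + - \<mu> * (xs \<bullet> y)"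
    for x'
    by (simp add: bil_f_def mat_mult_vec inner_diff_left inner_commute[of x' y] algebra_simps)
  have "bil_gap (mat \<mu>) (- (\<mu> *\<^sub>R ys)) (- (\<mu> *\<^sub>R xs)) R (x, y) =
      (R * norm (\<mu> *\<^sub>R (x - xs)) + - \<mu> * (ys \<bullet> x)) - (- \<mu> * (xs \<bullet> y) - R * norm (\<mu> *\<^sub>R (y - ys)))"
    unfolding bil_gap_def fst_conv snd_conv f_x f_y SUP_INF_affine_cball[OF assms] ..
  then show ?thesis
    unfolding norm_scaleR by (simp add: algebra_simps)
qed

lemma bil_gap_mat_lower_bound:
  fixes xs ys x y :: "real^'m::finite"
  assumes "0 \<le> \<mu>" and "norm xs \<le> D" and "norm ys \<le> D"
  shows "D * \<mu> * (norm (x - xs) + norm (y - ys)) \<le> bil_gap (mat \<mu>) (- (\<mu> *\<^sub>R ys)) (- (\<mu> *\<^sub>R xs)) (2 * D) (x, y)"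
proof -
  have "0 \<le> D"
    using assms(2) norm_ge_zero[of xs] by linarith
  have "xs \<bullet> y - ys \<bullet> x = xs \<bullet> (y - ys) - ys \<bullet> (x - xs)"
    by (simp add: inner_diff_right inner_commute)
  also have "\<dots> \<ge> - (D * norm (y - ys)) - D * norm (x - xs)"
    using Cauchy_Schwarz_ineq2[of xs "y - ys"] Cauchy_Schwarz_ineq2[of ys "x - xs"]
      mult_right_mono[OF assms(2), of "norm (y - ys)"] mult_right_mono[OF assms(3), of "norm (x - xs)"]
    by (smt (verit) norm_ge_zero)
  finally have "- (D * (norm (x - xs) + norm (y - ys))) \<le> xs \<bullet> y - ys \<bullet> x"
    by (simp add: algebra_simps)
  from mult_left_mono[OF this \<open>0 \<le> \<mu>\<close>] show ?thesis
    using \<open>0 \<le> D\<close> \<open>0 \<le> \<mu>\<close> by (simp add: bil_gap_mat algebra_simps)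
qed

definition complex_line :: "real^'m::finite \<Rightarrow> complex \<Rightarrow> 'm pt" where
  "complex_line v w = (Re w *\<^sub>R v, Im w *\<^sub>R v)"

lemma linear_complex_line: "linear (complex_line v)"
  by (intro linearI) (simp_all add: complex_line_def scaleR_add_left)

lemma bil_F_complex_line:
  "bil_F (mat \<mu>) (- (\<mu> *\<^sub>R (Im ws *\<^sub>R v))) (- (\<mu> *\<^sub>R (Re ws *\<^sub>R v))) (complex_line v w) =
     complex_line v (bilinear_game_op \<mu> ws w)"
  unfolding complex_line_def bil_F_mat
  by (simp add: bilinear_game_op_def scaleR_diff_left algebra_simps)

lemma complex_line_in_domD:
  assumes "norm v = 1" and "cmod w \<le> D"
  shows "complex_line v w \<in> domD D"
  using assms abs_Re_le_cmod[of w] abs_Im_le_cmod[of w] by (simp add: complex_line_def domD_def)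

lemma bil_gap_complex_line_lower_bound:
  fixes v :: "real^'m::finite"
  assumes v: "norm v = 1" and "0 \<le> \<mu>" and "\<bar>Re ws\<bar> \<le> D" and "\<bar>Im ws\<bar> \<le> D"
  shows "D * \<mu> * cmod (w - ws) \<le>
           bil_gap (mat \<mu>) (- (\<mu> *\<^sub>R (Im ws *\<^sub>R v))) (- (\<mu> *\<^sub>R (Re ws *\<^sub>R v))) (2 * D) (complex_line v w)"
proof -
  have "cmod (w - ws) \<le> norm (Re w *\<^sub>R v - Re ws *\<^sub>R v) + norm (Im w *\<^sub>R v - Im ws *\<^sub>R v)"
    using cmod_le[of "w - ws"] v by (simp flip: scaleR_diff_left)
  moreover have "0 \<le> D * \<mu>"
    using assms(2-3) by simp
  ultimately have "D * \<mu> * cmod (w - ws) \<le>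
      D * \<mu> * (norm (Re w *\<^sub>R v - Re ws *\<^sub>R v) + norm (Im w *\<^sub>R v - Im ws *\<^sub>R v))"
    by (rule mult_left_mono)
  also have "\<dots> \<le> bil_gap (mat \<mu>) (- (\<mu> *\<^sub>R (Im ws *\<^sub>R v))) (- (\<mu> *\<^sub>R (Re ws *\<^sub>R v))) (2 * D) (complex_line v w)"
    unfolding complex_line_def using assms by (intro bil_gap_mat_lower_bound) auto
  finally show ?thesis .
qed

lemma scli_iter_eq_trajectory:
  fixes Y :: "nat \<Rightarrow> 'v::real_vector"
  assumes "1 \<le> p"
    and recurrence: "\<And>n. Y (n + p) = (\<Sum>j<p. al j *\<^sub>R F (Y (n + j)) + be j *\<^sub>R Y (n + j))"
    and init: "\<And>k. k < p \<Longrightarrow> z0 k = Y (p - 1 - k)"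
  shows "scli_iter al be p F z0 t = Y (t + p - 1)"
proof -
  have "\<forall>i<p. scli_win al be p F z0 t i = Y (t + i)"
  proof (induction t)
    case 0
    show ?case
      using init \<open>1 \<le> p\<close> by (auto simp: Suc_diff_le)
  next
    case (Suc t)
    show ?case
    proof (intro allI impI)
      fix i
      assume "i < p"
      show "scli_win al be p F z0 (Suc t) i = Y (Suc t + i)"
      proof (cases "i < p - 1")
        case True
        then show ?thesis
          using Suc by simp
      next
        case False
        have "scli_win al be p F z0 (Suc t) i = Y (t + p)"
          using Suc False by (simp add: recurrence)
        moreover have "Suc t + i = t + p"
          using False \<open>i < p\<close> by simp
        ultimately show ?thesis
          by metis
      qed
    qed
  qed
  then show ?thesis
    using \<open>1 \<le> p\<close> by (simp add: scli_iter_def)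
qed

lemma bilinear_instance_of_scalar_instance:
  fixes W :: "nat \<Rightarrow> complex"
  assumes "scalar_instance al be p l D \<mu> ws W" and "1 \<le> p" and "0 < D"
    and gap: "G \<le> D * \<mu> * cmod (W (T + p - 1) - ws)"
  shows "\<exists>(M::real^'m::finite^'m) b1 b2 F z0 T'. in_Fbil l D M b1 b2 F \<and> (\<forall>k<p. z0 k \<in> domD D) \<and>
           T' \<in> {T..T + p - 1} \<and> G \<le> bil_gap M b1 b2 (2 * D) (scli_iter al be p F z0 T')"
proof -
  obtain v :: "real^'m" where v: "norm v = 1"
    using norm_axis_1 by blast
  define xs where "xs = Re ws *\<^sub>R v"
  define ys where "ys = Im ws *\<^sub>R v"
  define b1 where "b1 = - (\<mu> *\<^sub>R ys)"
  define b2 where "b2 = - (\<mu> *\<^sub>R xs)"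
  define F where "F = bil_F (mat \<mu>) b1 b2"
  define z0 where "z0 k = complex_line v (W (p - 1 - k))" for k
  from assms(1) have "0 < \<mu>" "\<mu> \<le> l" "\<bar>Re ws\<bar> \<le> D" "\<bar>Im ws\<bar> \<le> D" and init: "\<forall>j<p. cmod (W j) \<le> D"
    and recurrence: "\<forall>n. W (n + p) = (\<Sum>j<p. al j *\<^sub>R bilinear_game_op \<mu> ws (W (n + j)) + be j *\<^sub>R W (n + j))"
    by (simp_all add: scalar_instance_def)
  have "norm xs \<le> D" "norm ys \<le> D"
    using \<open>\<bar>Re ws\<bar> \<le> D\<close> \<open>\<bar>Im ws\<bar> \<le> D\<close> v by (simp_all add: xs_def ys_def)
  have "in_Fbil l D (mat \<mu>) b1 b2 F"
    unfolding F_def b1_def b2_def using \<open>0 < \<mu>\<close> \<open>\<mu> \<le> l\<close> \<open>norm xs \<le> D\<close> \<open>norm ys \<le> D\<close>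
    by (rule in_Fbil_mat)
  moreover have "z0 k \<in> domD D" if "k < p" for k
    using init that v by (simp add: z0_def complex_line_in_domD)
  moreover have "scli_iter al be p F z0 T = complex_line v (W (T + p - 1))"
  proof (rule scli_iter_eq_trajectory[OF \<open>1 \<le> p\<close>])
    have F: "F (complex_line v w) = complex_line v (bilinear_game_op \<mu> ws w)" for w
      unfolding F_def b1_def b2_def xs_def ys_def by (rule bil_F_complex_line)
    show "complex_line v (W (n + p)) =
        (\<Sum>j<p. al j *\<^sub>R F (complex_line v (W (n + j))) + be j *\<^sub>R complex_line v (W (n + j)))" for n
      using recurrence linear_complex_line[of v] by (simp add: F linear_sum linear_add linear_scale)
  qed (simp add: z0_def)
  moreover have "G \<le> bil_gap (mat \<mu>) b1 b2 (2 * D) (complex_line v (W (T + p - 1)))"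
    using gap bil_gap_complex_line_lower_bound[OF v, of \<mu> ws D "W (T + p - 1)"]
      \<open>0 < \<mu>\<close> \<open>\<bar>Re ws\<bar> \<le> D\<close> \<open>\<bar>Im ws\<bar> \<le> D\<close>
    by (simp add: b1_def b2_def xs_def ys_def)
  moreover have "T \<in> {T..T + p - 1}"
    using \<open>1 \<le> p\<close> by simp
  ultimately show ?thesis
    by metis
qed

theorem theorem7:
  fixes l D :: real and p :: nat and al be :: "nat \<Rightarrow> real"
  assumes "l > 0" and "D > 0" and "p \<ge> 1"
  shows "\<exists>c TA. c > 0 \<and> TA > 0 \<and>
    (\<forall>T::nat. real T \<ge> TA \<longrightarrow>
      (\<exists>(M::real^'m::finite^'m) b1 b2 F z0 T'.
         in_Fbil l D M b1 b2 F \<and>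
         (\<forall>k<p. z0 k \<in> domD D) \<and>
         T' \<in> {T..T + p - 1} \<and>
         bil_gap M b1 b2 (2 * D) (scli_iter al be p F z0 T') \<ge> c * l * D\<^sup>2 / sqrt (real T)))"
proof -
  obtain c TA where "0 < c" "0 < TA" and scalar: "\<forall>T::nat. TA \<le> real T \<longrightarrow>
      (\<exists>\<mu> ws W. scalar_instance al be p l D \<mu> ws W \<and>
         c * l * D\<^sup>2 / sqrt T \<le> D * \<mu> * cmod (W (T + p - 1) - ws))"
    using scalar_lower_bound[OF assms] by blast
  have "\<exists>(M::real^'m::finite^'m) b1 b2 F z0 T'. in_Fbil l D M b1 b2 F \<and> (\<forall>k<p. z0 k \<in> domD D) \<and>
      T' \<in> {T..T + p - 1} \<and> bil_gap M b1 b2 (2 * D) (scli_iter al be p F z0 T') \<ge> c * l * D\<^sup>2 / sqrt T"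
    if "TA \<le> real T" for T :: nat
    using scalar that bilinear_instance_of_scalar_instance[OF _ \<open>p \<ge> 1\<close> \<open>D > 0\<close>] by blast
  then show ?thesis
    using \<open>0 < c\<close> \<open>0 < TA\<close> by blast
qed

end
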